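(* Let $V$ be a real vector space of dimension $n$, $1\le k\le n-1$. For $B\in\wedge^{k+1}V^*$ and a subspace $L\subseteq V\oplus\wedge^kV^*$ set $e^BL=\{X+\alpha+i_XB\mid X+\alpha\in L\}$. Then: (a) if $L\subseteq\wedge^kV^*$ is weakly lagrangian, then $e^BL$ is weakly lagrangian for every $B\in\wedge^{k+1}V^*$; (b) if $L$ is a standard weakly lagrangian subspace with $\mathrm{pr}_1(L)\neq\{0\}$, then $e^BL$ is weakly lagrangian for every $B\in\wedge^{k+1}V^*$ if and only if $L$ is lagrangian; (c) if $L$ is a non-standard weakly lagrangian subspace, then there exists $B\in\wedge^{k+1}V^*$ such that $e^BL$ is not weakly lagrangian.
   Context: On $V\oplus\wedge^kV^*$ consider the pairing $\langle X+\alpha,Y+\beta\rangle=i_X\beta+i_Y\alpha\in\wedge^{k-1}V^*$; $L^\perp$ is the orthogonal of $L$; $L$ is isotropic if $L\subseteq L^\perp$, lagrangian if $L=L^\perp$, and weakly lagrangian if isotropic and $L\cap V=\mathrm{pr}_2(L)^\circ$, where $\mathrm{pr}_1,\mathrm{pr}_2$ are the projections onto $V$, $\wedge^kV^*$, and for $S\subseteq\wedge^kV^*$, $S^\circ=\{X\in V\mid i_X\eta=0\ \forall\eta\in S\}$. For $E\subseteq V$, $\mathrm{Ann}(E)=\{\alpha\in\wedge^kV^*\mid i_Y\alpha=0\ \forall Y\in E\}$. An isotropic $L$ with $E=\mathrm{pr}_1(L)$ is standard if $\mathrm{Ann}(E)^\circ=E$ (equivalently $\dim E=n$ or $\dim E\le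 n-k$), and non-standard otherwise. *)

theory Defs
  imports "HOL-Analysis.Analysis"
begin

text \<open>A k-form on the finite-dimensional real vector space 'v is represented as a
  function on argument sequences (nat \<Rightarrow> 'v) which depends only on the first k
  arguments, is linear in each of them and alternating.\<close>

type_synonym 'v form = "(nat \<Rightarrow> 'v) \<Rightarrow> real"

definition forms :: "nat \<Rightarrow> ('v::real_vector) form set" where
  "forms k = {\<alpha>.
     (\<forall>v w. (\<forall>i<k. v i = w i) \<longrightarrow> \<alpha> v = \<alpha> w) \<and>
     (\<forall>v i. i < k \<longrightarrow> linear (\<lambda>x. \<alpha> (v(i := x)))) \<and>
     (\<forall>v i j. i < k \<longrightarrow> j < k \<longrightarrow> i \<noteq> j \<longrightarrow> v i = v j \<longrightarrow> \<alpha> v = 0)}"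

definition iota :: "'v \<Rightarrow> 'v form \<Rightarrow> 'v form" where
  "iota X \<alpha> = (\<lambda>v. \<alpha> (\<lambda>i. if i = 0 then X else v (i - 1)))"

definition is_subspace :: "nat \<Rightarrow> ('v::real_vector \<times> 'v form) set \<Rightarrow> bool" where
  "is_subspace k L \<longleftrightarrow> L \<subseteq> UNIV \<times> forms k \<and> (0, \<lambda>v. 0) \<in> L \<and>
     (\<forall>X \<alpha> Y \<beta>. (X, \<alpha>) \<in> L \<longrightarrow> (Y, \<beta>) \<in> L \<longrightarrow> (X + Y, \<lambda>v. \<alpha> v + \<beta> v) \<in> L) \<and>
     (\<forall>c X \<alpha>. (X, \<alpha>) \<in> L \<longrightarrow> (c *\<^sub>R X, \<lambda>v. c * \<alpha> v) \<in> L)"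

definition pairing :: "('v \<times> 'v form) \<Rightarrow> ('v \<times> 'v form) \<Rightarrow> 'v form" where
  "pairing p q = (\<lambda>v. iota (fst p) (snd q) v + iota (fst q) (snd p) v)"

definition orth :: "nat \<Rightarrow> ('v::real_vector \<times> 'v form) set \<Rightarrow> ('v \<times> 'v form) set" where
  "orth k L = {q \<in> UNIV \<times> forms k. \<forall>p \<in> L. pairing p q = (\<lambda>v. 0)}"

definition isotropic :: "nat \<Rightarrow> ('v::real_vector \<times> 'v form) set \<Rightarrow> bool" where
  "isotropic k L \<longleftrightarrow> L \<subseteq> orth k L"

definition lagrangian :: "nat \<Rightarrow> ('v::real_vector \<times> 'v form) set \<Rightarrow> bool" where
  "lagrangian k L \<longleftrightarrow> L = orth k L"

definition annV :: "'v form set \<Rightarrow> 'v set" where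
  "annV S = {X. \<forall>\<eta>\<in>S. iota X \<eta> = (\<lambda>v. 0)}"

definition capV :: "('v::real_vector \<times> 'v form) set \<Rightarrow> 'v set" where
  "capV L = {X. (X, \<lambda>v. 0) \<in> L}"

definition weakly_lagrangian :: "nat \<Rightarrow> ('v::real_vector \<times> 'v form) set \<Rightarrow> bool" where
  "weakly_lagrangian k L \<longleftrightarrow> isotropic k L \<and> capV L = annV (snd ` L)"

definition Ann :: "nat \<Rightarrow> ('v::real_vector) set \<Rightarrow> 'v form set" where
  "Ann k E = {\<alpha> \<in> forms k. \<forall>Y\<in>E. iota Y \<alpha> = (\<lambda>v. 0)}"

definition standard :: "nat \<Rightarrow> ('v::real_vector \<times> 'v form) set \<Rightarrow> bool" where
  "standard k L \<longleftrightarrow> annV (Ann k (fst ` L)) = fst ` L"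

definition expB :: "'v form \<Rightarrow> ('v \<times> 'v form) set \<Rightarrow> ('v \<times> 'v form) set" where
  "expB B L = (\<lambda>(X, \<alpha>). (X, \<lambda>v. \<alpha> v + iota X B v)) ` L"

end

theory Submission
  imports Defs
begin

text \<open>
  The transform \<open>e\<^sup>B\<close> adds \<open>i\<^sub>X B\<close> to the form part of \<open>X + \<alpha> \<in> L\<close>, so everything depends on how
  \<open>X \<mapsto> i\<^sub>X B\<close> can vary on \<open>E = pr\<^sub>1(L)\<close>. For \<open>E = 0\<close> nothing changes. Since \<open>i\<^sub>X i\<^sub>Y B\<close> is skew
  in \<open>X, Y\<close>, \<open>e\<^sup>B\<close> preserves the pairing and hence lagrangians. Conversely, every linear map
  \<open>\<delta> : E \<rightarrow> \<And>\<^sup>k V\<^sup>*\<close> with \<open>i\<^sub>X \<delta>(Y) = -i\<^sub>Y \<delta>(X)\<close> is \<open>X \<mapsto> i\<^sub>X B\<close> for some \<open>(k+1)\<close>-form \<open>B\<close>, obtained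
  by adding wedge products \<open>e\<^sup>\<flat> \<and> \<eta>\<close> along an orthonormal basis of \<open>E\<close>.

  Taking \<open>\<delta> = f \<omega> - s\<close>, with \<open>s\<close> a linear section of \<open>pr\<^sub>1\<close> on \<open>L\<close>, \<open>\<omega> \<in> Ann(E)\<close> and \<open>f\<close> a linear
  functional, cancels the forms of \<open>L\<close> modulo \<open>W = L \<inter> \<And>\<^sup>k V\<^sup>* \<subseteq> Ann(E)\<close>. Then all forms of \<open>e\<^sup>B L\<close>
  lie in \<open>Ann(E)\<close>, so \<open>Ann(E)\<^sup>\<circ> \<subseteq> (pr\<^sub>2 e\<^sup>B L)\<^sup>\<circ>\<close>, while \<open>e\<^sup>B L \<inter> V \<subseteq> E\<close>. If \<open>L\<close> is non-standard,
  \<open>Ann(E)\<^sup>\<circ> \<noteq> E\<close> already breaks weak lagrangianity (take \<open>f = 0\<close>). If \<open>L\<close> is standard but not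
  lagrangian, some \<open>\<omega> \<in> Ann(E)\<close> lies outside \<open>W\<close>; choosing \<open>f(X\<^sub>0) = 1\<close> for some \<open>X\<^sub>0 \<in> E - 0\<close>
  gives \<open>X\<^sub>0 \<in> (pr\<^sub>2 e\<^sup>B L)\<^sup>\<circ>\<close> but \<open>X\<^sub>0 \<notin> e\<^sup>B L \<inter> V\<close>.
\<close>

section \<open>Alternating multilinear forms\<close>

lemma forms_cong:
  assumes "\<alpha> \<in> forms k" and "\<And>i. i < k \<Longrightarrow> v i = w i"
  shows "\<alpha> v = \<alpha> w"
  using assms unfolding forms_def by blast

lemma forms_linear_slot:
  assumes "\<alpha> \<in> forms k" and "i < k"
  shows "linear (\<lambda>x. \<alpha> (v(i := x)))"
  using assms unfolding forms_def by blast

lemma forms_alternating: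
  assumes "\<alpha> \<in> forms k" and "i < k" "j < k" "i \<noteq> j" "v i = v j"
  shows "\<alpha> v = 0"
  using assms unfolding forms_def by blast

lemma forms_add_slot:
  "\<alpha> \<in> forms k \<Longrightarrow> i < k \<Longrightarrow> \<alpha> (v(i := x + y)) = \<alpha> (v(i := x)) + \<alpha> (v(i := y))"
  using forms_linear_slot[of \<alpha> k i v] unfolding linear_iff by simp

lemma forms_scaleR_slot:
  "\<alpha> \<in> forms k \<Longrightarrow> i < k \<Longrightarrow> \<alpha> (v(i := c *\<^sub>R x)) = c * \<alpha> (v(i := x))"
  using forms_linear_slot[of \<alpha> k i v] unfolding linear_iff by simp

lemma formsI:
  assumes "\<And>v w. (\<And>i. i < k \<Longrightarrow> v i = w i) \<Longrightarrow> \<alpha> v = \<alpha> w"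
    and "\<And>v i x y. i < k \<Longrightarrow> \<alpha> (v(i := x + y)) = \<alpha> (v(i := x)) + \<alpha> (v(i := y))"
    and "\<And>v i c x. i < k \<Longrightarrow> \<alpha> (v(i := c *\<^sub>R x)) = c * \<alpha> (v(i := x))"
    and "\<And>v i j. i < k \<Longrightarrow> j < k \<Longrightarrow> i \<noteq> j \<Longrightarrow> v i = v j \<Longrightarrow> \<alpha> v = 0"
  shows "\<alpha> \<in> forms k"
proof -
  have "linear (\<lambda>x. \<alpha> (v(i := x)))" if "i < k" for v i
    unfolding linear_iff using assms(2,3) that by simp
  then show ?thesis unfolding forms_def using assms(1,4) by blast
qed

lemma forms_zero: "(\<lambda>v. 0) \<in> forms k"
  by (rule formsI) simp_all

lemma forms_add:
  assumes "\<alpha> \<in> forms k" "\<beta> \<in> forms k"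
  shows "(\<lambda>v. \<alpha> v + \<beta> v) \<in> forms k"
proof (rule formsI)
  show "\<alpha> v + \<beta> v = \<alpha> w + \<beta> w" if "\<And>i. i < k \<Longrightarrow> v i = w i" for v w
    using forms_cong[OF assms(1) that] forms_cong[OF assms(2) that] by simp
qed (use assms in \<open>simp_all add: forms_add_slot forms_scaleR_slot forms_alternating algebra_simps\<close>)

lemma forms_scale:
  assumes "\<alpha> \<in> forms k"
  shows "(\<lambda>v. c * \<alpha> v) \<in> forms k"
proof (rule formsI)
  show "c * \<alpha> v = c * \<alpha> w" if "\<And>i. i < k \<Longrightarrow> v i = w i" for v w
    using forms_cong[OF assms that] by simp
qed (use assms in \<open>simp_all add: forms_add_slot forms_scaleR_slot forms_alternating algebra_simps\<close>)

lemma forms_diff: "\<alpha> \<in> forms k \<Longrightarrow> \<beta> \<in> forms k \<Longrightarrow> (\<lambda>v. \<alpha> v - \<beta> v) \<in> forms k"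
  using forms_add[OF _ forms_scale, of \<alpha> k \<beta> "-1"] by simp

lemma forms_sum:
  "finite S \<Longrightarrow> (\<And>b. b \<in> S \<Longrightarrow> f b \<in> forms k) \<Longrightarrow> (\<lambda>v. \<Sum>b\<in>S. f b v) \<in> forms k"
  by (induction S rule: finite_induct) (simp_all add: forms_zero forms_add)

lemma alternating_swap:
  fixes f :: "(nat \<Rightarrow> 'v::real_vector) \<Rightarrow> real"
  assumes "i \<noteq> j"
    and add_i: "\<And>v x y. f (v(i := x + y)) = f (v(i := x)) + f (v(i := y))"
    and add_j: "\<And>v x y. f (v(j := x + y)) = f (v(j := x)) + f (v(j := y))"
    and alt: "\<And>v. v i = v j \<Longrightarrow> f v = 0"
  shows "f (v(i := x, j := y)) = - f (v(i := y, j := x))"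
proof -
  define g where "g x y = f (v(i := x, j := y))" for x y
  have "v(i := a + b, j := c) = (v(j := c))(i := a + b)" for a b c
    using \<open>i \<noteq> j\<close> by (auto simp: fun_eq_iff)
  then have g_add_left: "g (a + b) c = g a c + g b c" for a b c
    unfolding g_def by (metis add_i fun_upd_twist[OF \<open>i \<noteq> j\<close>])
  have g_add_right: "g a (b + c) = g a b + g a c" for a b c
    unfolding g_def by (simp add: add_j)
  have g_diag: "g a a = 0" for a
    unfolding g_def by (rule alt) (simp add: \<open>i \<noteq> j\<close>)
  have "0 = g (x + y) (x + y)" using g_diag by simp
  also have "\<dots> = g x x + g x y + (g y x + g y y)" by (simp only: g_add_left g_add_right)
  also have "\<dots> = g x y + g y x" using g_diag by simp
  finally show ?thesis unfolding g_def by linarith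
qed

lemma forms_swap_slots:
  assumes "\<alpha> \<in> forms k" "i < k" "j < k" "i \<noteq> j"
  shows "\<alpha> (v(i := x, j := y)) = - \<alpha> (v(i := y, j := x))"
  using assms by (intro alternating_swap forms_add_slot) (auto intro: forms_alternating)

lemma alternating_from_adjacent:
  fixes f :: "(nat \<Rightarrow> 'v::real_vector) \<Rightarrow> real"
  assumes swap: "\<And>v j x y. Suc j < n \<Longrightarrow> f (v(j := x, Suc j := y)) = - f (v(j := y, Suc j := x))"
    and adjacent: "\<And>v j. Suc j < n \<Longrightarrow> v j = v (Suc j) \<Longrightarrow> f v = 0"
  shows "a + Suc d < n \<Longrightarrow> v a = v (a + Suc d) \<Longrightarrow> f v = 0"
proof (induction d arbitrary: v)
  case 0
  then show ?case using adjacent[of a v] by simp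
next
  case (Suc d)
  define c where "c = a + Suc d"
  have "f v = - f (v(c := v (Suc c), Suc c := v c))"
    using swap[of c v "v c" "v (Suc c)"] Suc.prems by (simp add: c_def)
  moreover have "f (v(c := v (Suc c), Suc c := v c)) = 0"
    using Suc.prems by (intro Suc.IH) (auto simp: c_def)
  ultimately show ?case by simp
qed

lemma formsI_adjacent:
  assumes cong: "\<And>v w. (\<And>i. i < k \<Longrightarrow> v i = w i) \<Longrightarrow> \<alpha> v = \<alpha> w"
    and add: "\<And>v i x y. i < k \<Longrightarrow> \<alpha> (v(i := x + y)) = \<alpha> (v(i := x)) + \<alpha> (v(i := y))"
    and scale: "\<And>v i c x. i < k \<Longrightarrow> \<alpha> (v(i := c *\<^sub>R x)) = c * \<alpha> (v(i := x))"
    and adjacent: "\<And>v j. Suc j < k \<Longrightarrow> v j = v (Suc j) \<Longrightarrow> \<alpha> v = 0"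
  shows "\<alpha> \<in> forms k"
proof (rule formsI[OF cong add scale])
  have swap: "\<alpha> (v(j := x, Suc j := y)) = - \<alpha> (v(j := y, Suc j := x))" if "Suc j < k" for v j x y
    using that by (intro alternating_swap add) (auto intro: adjacent)
  have far: "\<alpha> v = 0" if "a + Suc d < k" "v a = v (a + Suc d)" for a d v
    using alternating_from_adjacent[where f = \<alpha> and n = k] swap adjacent that by blast
  show "\<alpha> v = 0" if ij: "i < k" "j < k" "i \<noteq> j" "v i = v j" for v i j
  proof (cases "i < j")
    case True
    then obtain d where "j = i + Suc d" by (metis less_iff_Suc_add add_Suc_right add.commute)
    then show ?thesis using far[of i d v] ij(2,4) by simp
  next
    case False
    then have "j < i" using ij(3) by simp
    then obtain d where "i = j + Suc d" by (metis less_iff_Suc_add add_Suc_right add.commute)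
    then show ?thesis using far[of j d v] ij(1,4) by simp
  qed
qed

section \<open>Interior products and wedge with a covector\<close>

definition prepend :: "'v \<Rightarrow> (nat \<Rightarrow> 'v) \<Rightarrow> nat \<Rightarrow> 'v" where
  "prepend X v = (\<lambda>i. if i = 0 then X else v (i - 1))"

lemma iota_prepend: "iota X \<alpha> v = \<alpha> (prepend X v)"
  unfolding iota_def prepend_def ..

lemma prepend_upd: "prepend X (v(i := x)) = (prepend X v)(Suc i := x)"
  unfolding prepend_def by (auto simp: fun_eq_iff)

lemma prepend_eq_upd: "prepend X v = (prepend Y v)(0 := X)"
  unfolding prepend_def by (auto simp: fun_eq_iff)

lemma iota_forms:
  assumes "B \<in> forms (Suc k)"
  shows "iota X B \<in> forms k"
proof (rule formsI)
  show "iota X B v = iota X B w" if "\<And>i. i < k \<Longrightarrow> v i = w i" for v w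
    unfolding iota_prepend by (rule forms_cong[OF assms]) (use that in \<open>auto simp: prepend_def\<close>)
  show "iota X B v = 0" if "i < k" "j < k" "i \<noteq> j" "v i = v j" for v i j
    unfolding iota_prepend
    by (rule forms_alternating[OF assms, of "Suc i" "Suc j"]) (use that in \<open>auto simp: prepend_def\<close>)
qed (simp_all only: iota_prepend prepend_upd forms_add_slot[OF assms] forms_scaleR_slot[OF assms] Suc_less_eq)

lemma iota_add_left:
  assumes "B \<in> forms (Suc k)"
  shows "iota (X + Y) B = (\<lambda>v. iota X B v + iota Y B v)"
proof
  fix v
  show "iota (X + Y) B v = iota X B v + iota Y B v"
    unfolding iota_prepend prepend_eq_upd[of "X + Y" v 0] prepend_eq_upd[of X v 0] prepend_eq_upd[of Y v 0]
    by (rule forms_add_slot[OF assms]) simp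
qed

lemma iota_scaleR_left:
  assumes "B \<in> forms (Suc k)"
  shows "iota (c *\<^sub>R X) B = (\<lambda>v. c * iota X B v)"
proof
  fix v
  show "iota (c *\<^sub>R X) B v = c * iota X B v"
    unfolding iota_prepend prepend_eq_upd[of "c *\<^sub>R X" v 0] prepend_eq_upd[of X v 0]
    by (rule forms_scaleR_slot[OF assms]) simp
qed

lemma iota_zero_left:
  assumes "\<alpha> \<in> forms k" "1 \<le> k"
  shows "iota 0 \<alpha> = (\<lambda>v. 0)"
proof -
  obtain k' where "k = Suc k'" using assms(2) by (cases k) auto
  with assms(1) show ?thesis using iota_scaleR_left[of \<alpha> k' 0 0] by simp
qed

lemma iota_add_right: "iota X (\<lambda>v. \<alpha> v + \<beta> v) = (\<lambda>v. iota X \<alpha> v + iota X \<beta> v)"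
  unfolding iota_def ..

lemma iota_diff_right: "iota X (\<lambda>v. \<alpha> v - \<beta> v) = (\<lambda>v. iota X \<alpha> v - iota X \<beta> v)"
  unfolding iota_def ..

lemma iota_scale_right: "iota X (\<lambda>v. c * \<alpha> v) = (\<lambda>v. c * iota X \<alpha> v)"
  unfolding iota_def ..

lemma iota_zero_right: "iota X (\<lambda>v. 0) = (\<lambda>v. 0)"
  unfolding iota_def ..

lemma iota_iota: "iota X (iota Y B) v = B ((\<lambda>j. v (j - 2))(0 := Y, 1 := X))"
  unfolding iota_def by (rule arg_cong[where f = B]) (auto simp: fun_eq_iff numeral_2_eq_2)

lemma iota_iota_swap:
  assumes "B \<in> forms (Suc (Suc k))"
  shows "iota X (iota Y B) = (\<lambda>v. - iota Y (iota X B) v)"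
  unfolding iota_iota by (intro ext forms_swap_slots[OF assms]) auto

lemma iota_iota_self:
  assumes "B \<in> forms (Suc (Suc k))"
  shows "iota X (iota X B) = (\<lambda>v. 0)"
  unfolding iota_iota by (intro ext forms_alternating[OF assms, of 0 1]) auto

lemma form_vanishes_if_iota_first:
  assumes "g 0 = Y" and "iota Y \<eta> = (\<lambda>v. 0)"
  shows "\<eta> g = 0"
proof -
  have "g = prepend Y (\<lambda>j. g (Suc j))" using assms(1) unfolding prepend_def by (auto simp: fun_eq_iff)
  then show ?thesis using assms(2) unfolding iota_prepend by (metis)
qed

definition drop_arg :: "nat \<Rightarrow> (nat \<Rightarrow> 'v) \<Rightarrow> nat \<Rightarrow> 'v" where
  "drop_arg i v = (\<lambda>j. if j < i then v j else v (Suc j))"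

definition wedge :: "nat \<Rightarrow> 'v::real_inner \<Rightarrow> 'v form \<Rightarrow> 'v form" where
  "wedge k e \<eta> = (\<lambda>v. \<Sum>i\<le>k. (-1) ^ i * (e \<bullet> v i) * \<eta> (drop_arg i v))"

lemma drop_arg_upd_same: "drop_arg m (v(m := x)) = drop_arg m v"
  unfolding drop_arg_def by (auto simp: fun_eq_iff)

lemma drop_arg_upd_other:
  "i \<noteq> m \<Longrightarrow> drop_arg i (v(m := x)) = (drop_arg i v)((if m < i then m else m - 1) := x)"
  unfolding drop_arg_def by (auto simp: fun_eq_iff)

lemma wedge_summand_add_slot:
  assumes "\<eta> \<in> forms k" "i \<le> k" "m < Suc k"
  shows "(-1) ^ i * (e \<bullet> (v(m := x + y)) i) * \<eta> (drop_arg i (v(m := x + y))) =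
         (-1) ^ i * (e \<bullet> (v(m := x)) i) * \<eta> (drop_arg i (v(m := x))) +
         (-1) ^ i * (e \<bullet> (v(m := y)) i) * \<eta> (drop_arg i (v(m := y)))"
proof (cases "i = m")
  case True
  then show ?thesis by (simp add: drop_arg_upd_same inner_add_right algebra_simps)
next
  case False
  then have "(if m < i then m else m - 1) < k" using assms(2,3) by auto
  with False show ?thesis
    unfolding drop_arg_upd_other[OF False] using forms_add_slot[OF assms(1)] by (simp add: algebra_simps)
qed

lemma wedge_summand_scaleR_slot:
  assumes "\<eta> \<in> forms k" "i \<le> k" "m < Suc k"
  shows "(-1) ^ i * (e \<bullet> (v(m := c *\<^sub>R x)) i) * \<eta> (drop_arg i (v(m := c *\<^sub>R x))) =
         c * ((-1) ^ i * (e \<bullet> (v(m := x)) i) * \<eta> (drop_arg i (v(m := x))))"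
proof (cases "i = m")
  case True
  then show ?thesis by (simp add: drop_arg_upd_same algebra_simps)
next
  case False
  then have "(if m < i then m else m - 1) < k" using assms(2,3) by auto
  with False show ?thesis
    unfolding drop_arg_upd_other[OF False] using forms_scaleR_slot[OF assms(1)] by (simp add: algebra_simps)
qed

lemma wedge_forms:
  assumes \<eta>: "\<eta> \<in> forms k"
  shows "wedge k e \<eta> \<in> forms (Suc k)"
proof (rule formsI_adjacent)
  show "wedge k e \<eta> v = wedge k e \<eta> w" if vw: "\<And>i. i < Suc k \<Longrightarrow> v i = w i" for v w
  proof -
    have "\<eta> (drop_arg i v) = \<eta> (drop_arg i w)" if "i \<le> k" for i
      by (rule forms_cong[OF \<eta>]) (use vw that in \<open>auto simp: drop_arg_def\<close>)
    then show ?thesis unfolding wedge_def using vw by (intro sum.cong) auto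
  qed
  show "wedge k e \<eta> (v(m := x + y)) = wedge k e \<eta> (v(m := x)) + wedge k e \<eta> (v(m := y))"
    if "m < Suc k" for v m x y
    unfolding wedge_def sum.distrib[symmetric]
    by (intro sum.cong refl wedge_summand_add_slot[OF \<eta> _ that]) simp
  show "wedge k e \<eta> (v(m := c *\<^sub>R x)) = c * wedge k e \<eta> (v(m := x))"
    if "m < Suc k" for v m c x
    unfolding wedge_def sum_distrib_left
    by (intro sum.cong refl wedge_summand_scaleR_slot[OF \<eta> _ that]) simp
  show "wedge k e \<eta> v = 0" if m: "Suc m < Suc k" and eq: "v m = v (Suc m)" for v m
  proof -
    define T where "T i = (-1) ^ i * (e \<bullet> v i) * \<eta> (drop_arg i v)" for i
    \<comment> \<open>Every summand except the \<open>m\<close>-th and \<open>Suc m\<close>-th keeps both equal arguments.\<close>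
    have other: "T i = 0" if "i \<le> k" "i \<noteq> m" "i \<noteq> Suc m" for i
    proof (cases "i < m")
      case True
      have "\<eta> (drop_arg i v) = 0"
        by (rule forms_alternating[OF \<eta>, of "m - 1" m]) (use True m eq in \<open>auto simp: drop_arg_def\<close>)
      then show ?thesis unfolding T_def by simp
    next
      case False
      then have "Suc m < i" using that by simp
      have "\<eta> (drop_arg i v) = 0"
        by (rule forms_alternating[OF \<eta>, of m "Suc m"])
          (use \<open>Suc m < i\<close> that eq in \<open>auto simp: drop_arg_def\<close>)
      then show ?thesis unfolding T_def by simp
    qed
    have "drop_arg m v = drop_arg (Suc m) v"
      using eq unfolding drop_arg_def by (auto simp: fun_eq_iff less_Suc_eq)
    then have "T m + T (Suc m) = 0" unfolding T_def using eq by simp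
    moreover have "wedge k e \<eta> v = sum T {m, Suc m}"
      unfolding wedge_def T_def[symmetric] by (rule sum.mono_neutral_right) (use m other in auto)
    ultimately show ?thesis by simp
  qed
qed

lemma iota_wedge_self:
  assumes "e \<bullet> e = 1" and "iota e \<eta> = (\<lambda>v. 0)"
  shows "iota e (wedge k e \<eta>) = \<eta>"
proof
  fix w
  define T where "T i = (-1) ^ i * (e \<bullet> prepend e w i) * \<eta> (drop_arg i (prepend e w))" for i
  have "T i = 0" if "i \<noteq> 0" for i
    using form_vanishes_if_iota_first[OF _ assms(2), of "drop_arg i (prepend e w)"] that
    unfolding T_def by (simp add: drop_arg_def prepend_def)
  then have "sum T {..k} = sum T {0}" by (intro sum.mono_neutral_right) auto
  moreover have "drop_arg 0 (prepend e w) = w" unfolding drop_arg_def prepend_def by (simp add: fun_eq_iff)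
  ultimately show "iota e (wedge k e \<eta>) w = \<eta> w"
    unfolding iota_prepend wedge_def T_def[symmetric] using assms(1) by (simp add: T_def prepend_def)
qed

lemma iota_wedge_orthogonal:
  assumes "e \<bullet> Y = 0" and "iota Y \<eta> = (\<lambda>v. 0)"
  shows "iota Y (wedge k e \<eta>) = (\<lambda>v. 0)"
proof
  fix w
  have "(-1) ^ i * (e \<bullet> prepend Y w i) * \<eta> (drop_arg i (prepend Y w)) = 0" for i
    using assms form_vanishes_if_iota_first[OF _ assms(2), of "drop_arg i (prepend Y w)"]
    by (cases "i = 0") (simp_all add: drop_arg_def prepend_def)
  then show "iota Y (wedge k e \<eta>) w = 0" unfolding iota_prepend wedge_def by (intro sum.neutral) blast
qed

section \<open>Skew linear maps are interior products\<close>

definition linear_form_map :: "nat \<Rightarrow> ('v::real_vector \<Rightarrow> 'v form) \<Rightarrow> bool" where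
  "linear_form_map k \<delta> \<longleftrightarrow> (\<forall>X. \<delta> X \<in> forms k) \<and>
     (\<forall>X Y. \<delta> (X + Y) = (\<lambda>v. \<delta> X v + \<delta> Y v)) \<and> (\<forall>c X. \<delta> (c *\<^sub>R X) = (\<lambda>v. c * \<delta> X v))"

definition skew_on :: "'v set \<Rightarrow> ('v \<Rightarrow> 'v form) \<Rightarrow> bool" where
  "skew_on E \<delta> \<longleftrightarrow> (\<forall>X\<in>E. \<forall>Y\<in>E. iota X (\<delta> Y) = (\<lambda>v. - iota Y (\<delta> X) v))"

lemma linear_form_mapD:
  assumes "linear_form_map k \<delta>"
  shows "\<delta> X \<in> forms k" "\<delta> (X + Y) = (\<lambda>v. \<delta> X v + \<delta> Y v)" "\<delta> (c *\<^sub>R X) = (\<lambda>v. c * \<delta> X v)"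
  using assms unfolding linear_form_map_def by blast+

lemma skew_on_subset: "skew_on E \<delta> \<Longrightarrow> F \<subseteq> E \<Longrightarrow> skew_on F \<delta>"
  unfolding skew_on_def by blast

text \<open>The correction \<open>e\<^sup>\<flat> \<and> \<eta>\<close> with \<open>\<eta> = \<delta> e - i\<^sub>e B'\<close> repairs the value at \<open>e\<close> without
  disturbing it on \<open>span S\<close>: skewness gives \<open>i\<^sub>e \<eta> = 0\<close> and \<open>i\<^sub>Y \<eta> = 0\<close> for \<open>Y \<in> span S\<close>.\<close>
lemma extend_skew_map_insert:
  fixes \<delta> :: "'v::real_inner \<Rightarrow> 'v form"
  assumes k: "1 \<le> k" and \<delta>: "linear_form_map k \<delta>" and skew: "skew_on (span (insert e S)) \<delta>"
    and e: "e \<bullet> e = 1" "\<And>Y. Y \<in> S \<Longrightarrow> orthogonal e Y"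
    and B': "B' \<in> forms (Suc k)" "\<And>X. X \<in> span S \<Longrightarrow> iota X B' = \<delta> X"
  shows "\<exists>B\<in>forms (Suc k). \<forall>X\<in>span (insert e S). iota X B = \<delta> X"
proof -
  obtain k' where "k = Suc k'" using k by (cases k) auto
  with B'(1) have B'_Suc: "B' \<in> forms (Suc (Suc k'))" by simp
  note \<delta>D = linear_form_mapD[OF \<delta>]
  have e_in: "e \<in> span (insert e S)" by (simp add: span_base)
  have S_in: "Y \<in> span (insert e S)" if "Y \<in> span S" for Y
    using that span_mono[of S "insert e S"] by blast
  define \<eta> where "\<eta> = (\<lambda>v. \<delta> e v - iota e B' v)"
  have \<eta>: "\<eta> \<in> forms k" unfolding \<eta>_def by (rule forms_diff[OF \<delta>D(1) iota_forms[OF B'(1)]])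
  have "iota e (\<delta> e) = (\<lambda>v. - iota e (\<delta> e) v)"
    using skew e_in unfolding skew_on_def by blast
  then have "iota e (\<delta> e) = (\<lambda>v. 0)" by (simp add: fun_eq_iff)
  then have iota_e_\<eta>: "iota e \<eta> = (\<lambda>v. 0)"
    unfolding \<eta>_def iota_diff_right iota_iota_self[OF B'_Suc] by simp
  have iota_S_\<eta>: "iota Y \<eta> = (\<lambda>v. 0)" if Y: "Y \<in> span S" for Y
  proof -
    have "iota Y (\<delta> e) = (\<lambda>v. - iota e (\<delta> Y) v)"
      using skew S_in[OF Y] e_in unfolding skew_on_def by blast
    then show ?thesis
      unfolding \<eta>_def iota_diff_right iota_iota_swap[OF B'_Suc, of Y e] B'(2)[OF Y] by simp
  qed
  have e_orth: "e \<bullet> Y = 0" if "Y \<in> span S" for Y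
    using orthogonal_to_span[OF that] e(2) by (simp add: orthogonal_def)
  define B where "B = (\<lambda>v. B' v + wedge k e \<eta> v)"
  have B: "B \<in> forms (Suc k)" unfolding B_def by (rule forms_add[OF B'(1) wedge_forms[OF \<eta>]])
  have B_e: "iota e B = \<delta> e"
    unfolding B_def iota_add_right iota_wedge_self[OF e(1) iota_e_\<eta>] by (simp add: \<eta>_def)
  have B_S: "iota Y B = \<delta> Y" if "Y \<in> span S" for Y
    unfolding B_def iota_add_right iota_wedge_orthogonal[OF e_orth[OF that] iota_S_\<eta>[OF that]]
    using B'(2)[OF that] by simp
  have "iota X B = \<delta> X" if X: "X \<in> span (insert e S)" for X
  proof -
    obtain t where t: "X - t *\<^sub>R e \<in> span S" using X span_breakdown_eq by blast
    have "iota X B = iota (t *\<^sub>R e + (X - t *\<^sub>R e)) B" by simp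
    also have "\<dots> = (\<lambda>v. t * \<delta> e v + \<delta> (X - t *\<^sub>R e) v)"
      unfolding iota_add_left[OF B] iota_scaleR_left[OF B] B_e B_S[OF t] ..
    also have "\<dots> = \<delta> X" using \<delta>D(2)[of "t *\<^sub>R e" "X - t *\<^sub>R e"] \<delta>D(3) by simp
    finally show ?thesis .
  qed
  with B show ?thesis by blast
qed

lemma exists_form_extending_skew_map_span:
  fixes \<delta> :: "'v::real_inner \<Rightarrow> 'v form"
  assumes k: "1 \<le> k" and \<delta>: "linear_form_map k \<delta>"
    and "finite S" "pairwise orthogonal S" "\<forall>x\<in>S. norm x = 1" "skew_on (span S) \<delta>"
  shows "\<exists>B\<in>forms (Suc k). \<forall>X\<in>span S. iota X B = \<delta> X"
  using assms(3-)
proof (induction S rule: finite_induct)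
  case empty
  have "\<delta> 0 = (\<lambda>v. 0)" using linear_form_mapD(3)[OF \<delta>, of 0 0] by simp
  then show ?case by (auto intro!: bexI[of _ "\<lambda>v. 0"] forms_zero simp: iota_zero_right)
next
  case (insert e S)
  have "\<exists>B\<in>forms (Suc k). \<forall>X\<in>span S. iota X B = \<delta> X"
    using insert.prems skew_on_subset[OF _ span_mono] by (intro insert.IH) (auto simp: pairwise_insert)
  moreover have "e \<bullet> e = 1" using insert.prems(2) by (simp add: norm_eq_1)
  moreover have "orthogonal e Y" if "Y \<in> S" for Y
    using insert.prems(1) insert.hyps(2) that by (auto simp: pairwise_insert)
  ultimately show ?case using extend_skew_map_insert[OF k \<delta> insert.prems(3)] by blast
qed

lemma exists_form_extending_skew_map:
  fixes \<delta> :: "'v::euclidean_space \<Rightarrow> 'v form"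
  assumes "1 \<le> k" "linear_form_map k \<delta>" "subspace E" "skew_on E \<delta>"
  obtains B where "B \<in> forms (Suc k)" "\<And>X. X \<in> E \<Longrightarrow> iota X B = \<delta> X"
proof -
  obtain S where S: "pairwise orthogonal S" "\<And>x. x \<in> S \<Longrightarrow> norm x = 1" "independent S" "span S = E"
    using orthonormal_basis_subspace[OF assms(3)] by metis
  have "finite S" using S(3) by (rule finiteI_independent)
  then obtain B where "B \<in> forms (Suc k)" "\<forall>X\<in>span S. iota X B = \<delta> X"
    using exists_form_extending_skew_map_span[OF assms(1,2)] S assms(4) by blast
  with that S(4) show ?thesis by blast
qed

section \<open>Subspaces of \<open>V \<oplus> \<And>\<^sup>k V\<^sup>*\<close>\<close>

lemma is_subspaceD:
  assumes "is_subspace k L"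
  shows "L \<subseteq> UNIV \<times> forms k" "(0, \<lambda>v. 0) \<in> L"
    "\<And>X \<alpha> Y \<beta>. (X, \<alpha>) \<in> L \<Longrightarrow> (Y, \<beta>) \<in> L \<Longrightarrow> (X + Y, \<lambda>v. \<alpha> v + \<beta> v) \<in> L"
    "\<And>c X \<alpha>. (X, \<alpha>) \<in> L \<Longrightarrow> (c *\<^sub>R X, \<lambda>v. c * \<alpha> v) \<in> L"
  using assms unfolding is_subspace_def by blast+

lemma is_subspace_diff:
  assumes "is_subspace k L" "(X, \<alpha>) \<in> L" "(Y, \<beta>) \<in> L"
  shows "(X - Y, \<lambda>v. \<alpha> v - \<beta> v) \<in> L"
  using is_subspaceD(3)[OF assms(1,2) is_subspaceD(4)[OF assms(1,3), of "-1"]] by simp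

lemma subspace_fst_image:
  assumes "is_subspace k L"
  shows "subspace (fst ` L)"
proof (rule subspaceI)
  show "0 \<in> fst ` L" using is_subspaceD(2)[OF assms] by force
  show "x + y \<in> fst ` L" if "x \<in> fst ` L" "y \<in> fst ` L" for x y
    using that is_subspaceD(3)[OF assms] by force
  show "c *\<^sub>R x \<in> fst ` L" if "x \<in> fst ` L" for c x
    using that is_subspaceD(4)[OF assms] by force
qed

lemma exists_linear_section:
  fixes L :: "('v::euclidean_space \<times> 'v form) set"
  assumes L: "is_subspace k L"
  obtains s where "linear_form_map k s" "\<And>X. X \<in> fst ` L \<Longrightarrow> (X, s X) \<in> L"
proof -
  note LD = is_subspaceD[OF L]
  obtain S where S: "S \<subseteq> fst ` L" "pairwise orthogonal S" "\<And>x. x \<in> S \<Longrightarrow> norm x = 1"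
    "independent S" "span S = fst ` L"
    using orthonormal_basis_subspace[OF subspace_fst_image[OF L]] by metis
  have fin: "finite S" using S(4) by (rule finiteI_independent)
  define \<alpha> where "\<alpha> b = (SOME a. (b, a) \<in> L)" for b
  have \<alpha>: "(b, \<alpha> b) \<in> L" if b: "b \<in> S" for b
  proof -
    obtain a where "(b, a) \<in> L" using S(1) b by force
    then show ?thesis unfolding \<alpha>_def by (rule someI[where P = "\<lambda>a. (b, a) \<in> L"])
  qed
  define s where "s X = (\<lambda>v. \<Sum>b\<in>S. (X \<bullet> b) * \<alpha> b v)" for X
  have s_forms: "s X \<in> forms k" for X
    unfolding s_def using \<alpha> LD(1) by (intro forms_sum[OF fin] forms_scale) blast
  have s_add: "s (X + Y) = (\<lambda>v. s X v + s Y v)" for X Y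
    unfolding s_def by (simp add: inner_add_left distrib_right sum.distrib)
  have s_scale: "s (c *\<^sub>R X) = (\<lambda>v. c * s X v)" for c X
    unfolding s_def by (simp add: sum_distrib_left mult.assoc)
  have s_basis: "s b = \<alpha> b" if b: "b \<in> S" for b
  proof
    fix v
    have "s b v = (\<Sum>b'\<in>{b}. (b \<bullet> b') * \<alpha> b' v)"
      unfolding s_def using b S(2)
      by (intro sum.mono_neutral_right fin) (auto simp: pairwise_def orthogonal_def)
    then show "s b v = \<alpha> b v" using S(3)[OF b] by (simp add: norm_eq_1)
  qed
  have "subspace {X. (X, s X) \<in> L}"
  proof (rule subspaceI)
    show "0 \<in> {X. (X, s X) \<in> L}" using LD(2) s_scale[of 0 0] by simp
  qed (use LD(3,4) s_add s_scale in auto)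
  then have "(X, s X) \<in> L" if "X \<in> span S" for X
    using span_induct[OF that, of "\<lambda>X. (X, s X) \<in> L"] \<alpha> s_basis by simp
  moreover have "linear_form_map k s"
    unfolding linear_form_map_def using s_forms s_add s_scale by blast
  ultimately show ?thesis using S(5) that by blast
qed

lemma orthD:
  assumes "(Y, \<beta>) \<in> orth k L"
  shows "\<beta> \<in> forms k" "\<And>X \<alpha> v. (X, \<alpha>) \<in> L \<Longrightarrow> iota X \<beta> v + iota Y \<alpha> v = 0"
  using assms unfolding orth_def pairing_def by (force simp: fun_eq_iff)+

lemma isotropicD:
  assumes "isotropic k L" "(X, \<alpha>) \<in> L" "(Y, \<beta>) \<in> L"
  shows "iota X \<beta> v + iota Y \<alpha> v = 0"
  using assms orthD(2) unfolding isotropic_def by blast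

lemma Ann_zero: "(\<lambda>v. 0) \<in> Ann k E"
  by (simp add: Ann_def forms_zero iota_zero_right)

lemma Ann_add: "\<alpha> \<in> Ann k E \<Longrightarrow> \<beta> \<in> Ann k E \<Longrightarrow> (\<lambda>v. \<alpha> v + \<beta> v) \<in> Ann k E"
  by (simp add: Ann_def iota_add_right forms_add)

lemma Ann_scale: "\<alpha> \<in> Ann k E \<Longrightarrow> (\<lambda>v. c * \<alpha> v) \<in> Ann k E"
  by (simp add: Ann_def iota_scale_right forms_scale)

lemma subset_annV_Ann: "E \<subseteq> annV (Ann k E)"
  unfolding annV_def Ann_def by blast

lemma annV_antimono: "S \<subseteq> T \<Longrightarrow> annV T \<subseteq> annV S"
  unfolding annV_def by blast

lemma isotropic_forms_in_Ann:
  assumes "1 \<le> k" "is_subspace k L" "isotropic k L" "(0, \<omega>) \<in> L"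
  shows "\<omega> \<in> Ann k (fst ` L)"
proof -
  have "iota Y \<omega> v = 0" if "(Y, \<beta>) \<in> L" for Y \<beta> v
    using isotropicD[OF assms(3,4) that, of v] is_subspaceD(1)[OF assms(2)] that
      iota_zero_left[OF _ assms(1), of \<beta>] by auto
  then show ?thesis
    unfolding Ann_def using is_subspaceD(1)[OF assms(2)] assms(4) by (auto simp: fun_eq_iff)
qed

lemma lagrangian_imp_weakly_lagrangian:
  assumes "lagrangian k L"
  shows "weakly_lagrangian k L"
proof -
  have pairing_zero: "pairing p (X, \<lambda>v. 0) = iota X (snd p)" for p X
    by (simp add: pairing_def iota_def)
  have "(X, \<lambda>v. 0) \<in> orth k L \<longleftrightarrow> X \<in> annV (snd ` L)" for X
    unfolding orth_def annV_def using forms_zero by (auto simp: pairing_zero)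
  then have "capV L = annV (snd ` L)"
    using assms unfolding lagrangian_def capV_def by auto
  then show ?thesis using assms unfolding weakly_lagrangian_def isotropic_def lagrangian_def by simp
qed

lemma lagrangian_if_Ann_in:
  fixes L :: "('v::euclidean_space \<times> 'v form) set"
  assumes k: "1 \<le> k" and L: "is_subspace k L" and iso: "isotropic k L" and "standard k L"
    and Ann_in: "\<And>\<omega>. \<omega> \<in> Ann k (fst ` L) \<Longrightarrow> (0, \<omega>) \<in> L"
  shows "lagrangian k L"
  unfolding lagrangian_def
proof
  show "L \<subseteq> orth k L" using iso unfolding isotropic_def .
  show "orth k L \<subseteq> L"
  proof (clarify)
    fix Y \<beta> assume q: "(Y, \<beta>) \<in> orth k L"
    have "iota Y \<omega> = (\<lambda>v. 0)" if "\<omega> \<in> Ann k (fst ` L)" for \<omega>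
      using orthD(2)[OF q Ann_in[OF that]] iota_zero_left[OF orthD(1)[OF q] k]
      by (simp add: fun_eq_iff)
    then have Y: "Y \<in> fst ` L"
      using \<open>standard k L\<close> unfolding standard_def annV_def by blast
    obtain s where s: "linear_form_map k s" "\<And>X. X \<in> fst ` L \<Longrightarrow> (X, s X) \<in> L"
      using exists_linear_section[OF L] by blast
    \<comment> \<open>\<open>\<beta>\<close> and the section value \<open>s Y\<close> pair in the same way with \<open>L\<close>.\<close>
    have "iota X (\<lambda>v. \<beta> v - s Y v) = (\<lambda>v. 0)" if "(X, \<alpha>) \<in> L" for X \<alpha>
      using orthD(2)[OF q that] isotropicD[OF iso that s(2)[OF Y]]
      by (simp add: iota_diff_right fun_eq_iff add_eq_0_iff)
    then have "(\<lambda>v. \<beta> v - s Y v) \<in> Ann k (fst ` L)"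
      unfolding Ann_def using forms_diff[OF orthD(1)[OF q] linear_form_mapD(1)[OF s(1)]] by force
    from is_subspaceD(3)[OF L s(2)[OF Y] Ann_in[OF this]]
    show "(Y, \<beta>) \<in> L" by simp
  qed
qed

section \<open>B-field transforms\<close>

lemma mem_expB_iff: "q \<in> expB B L \<longleftrightarrow> (\<exists>X \<alpha>. (X, \<alpha>) \<in> L \<and> q = (X, \<lambda>v. \<alpha> v + iota X B v))"
  unfolding expB_def by auto

lemma expB_eq_self_if_fst_zero:
  assumes "B \<in> forms (Suc k)" "\<forall>p\<in>L. fst p = 0"
  shows "expB B L = L"
proof -
  have "(\<lambda>(X, \<alpha>). (X, \<lambda>v. \<alpha> v + iota X B v)) p = p" if "p \<in> L" for p
    using that assms(2) iota_zero_left[OF assms(1)] by (cases p) auto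
  then have "expB B L = (\<lambda>p. p) ` L" unfolding expB_def by (rule image_cong[OF refl])
  then show ?thesis by simp
qed

lemma capV_expB_subset: "capV (expB B L) \<subseteq> fst ` L"
  unfolding capV_def expB_def by force

lemma pairing_expB:
  assumes "B \<in> forms (Suc (Suc k))"
  shows "pairing (X, \<lambda>v. \<alpha> v + iota X B v) (Y, \<lambda>v. \<beta> v + iota Y B v) = pairing (X, \<alpha>) (Y, \<beta>)"
  by (simp add: pairing_def iota_add_right iota_iota_swap[OF assms, of X Y] fun_eq_iff)

lemma orth_expB:
  assumes "1 \<le> k" and B: "B \<in> forms (Suc k)"
  shows "orth k (expB B L) = expB B (orth k L)"
proof
  obtain k' where "k = Suc k'" using assms(1) by (cases k) auto
  with B have B': "B \<in> forms (Suc (Suc k'))" by simp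
  show "expB B (orth k L) \<subseteq> orth k (expB B L)"
  proof
    fix q assume "q \<in> expB B (orth k L)"
    then obtain Y \<beta> where Y: "(Y, \<beta>) \<in> orth k L" and q: "q = (Y, \<lambda>v. \<beta> v + iota Y B v)"
      unfolding mem_expB_iff by blast
    have "pairing p q = (\<lambda>v. 0)" if "p \<in> expB B L" for p
      using that Y unfolding mem_expB_iff q orth_def by (auto simp: pairing_expB[OF B'])
    moreover have "snd q \<in> forms k" unfolding q using forms_add[OF orthD(1)[OF Y] iota_forms[OF B]] by simp
    ultimately show "q \<in> orth k (expB B L)" unfolding orth_def by (auto simp: mem_Times_iff)
  qed
  show "orth k (expB B L) \<subseteq> expB B (orth k L)"
  proof
    fix q assume q: "q \<in> orth k (expB B L)"
    obtain Y \<gamma> where q_eq: "q = (Y, \<gamma>)" by (cases q)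
    define \<beta> where "\<beta> = (\<lambda>v. \<gamma> v - iota Y B v)"
    have \<gamma>: "\<gamma> = (\<lambda>v. \<beta> v + iota Y B v)" unfolding \<beta>_def by simp
    have "pairing p (Y, \<beta>) = (\<lambda>v. 0)" if p: "p \<in> L" for p
    proof -
      obtain X \<alpha> where p_eq: "p = (X, \<alpha>)" by (cases p)
      have "(X, \<lambda>v. \<alpha> v + iota X B v) \<in> expB B L" using p p_eq unfolding mem_expB_iff by blast
      then have "pairing (X, \<lambda>v. \<alpha> v + iota X B v) (Y, \<gamma>) = (\<lambda>v. 0)"
        using q unfolding q_eq orth_def by blast
      then show ?thesis unfolding p_eq \<gamma> pairing_expB[OF B'] .
    qed
    moreover have "\<beta> \<in> forms k"
      unfolding \<beta>_def using forms_diff[OF orthD(1)[OF q[unfolded q_eq]] iota_forms[OF B]] .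
    ultimately have "(Y, \<beta>) \<in> orth k L" unfolding orth_def by blast
    then show "q \<in> expB B (orth k L)" unfolding q_eq \<gamma> mem_expB_iff by blast
  qed
qed

lemma lagrangian_expB:
  assumes "1 \<le> k" "lagrangian k L" "B \<in> forms (Suc k)"
  shows "lagrangian k (expB B L)"
proof -
  have "orth k (expB B L) = expB B (orth k L)" by (rule orth_expB[OF assms(1,3)])
  also have "\<dots> = expB B L" using assms(2) unfolding lagrangian_def by simp
  finally show ?thesis unfolding lagrangian_def by simp
qed

lemma exists_B_twisting_section:
  fixes L :: "('v::euclidean_space \<times> 'v form) set"
  assumes k: "1 \<le> k" and L: "is_subspace k L" and iso: "isotropic k L"
    and s: "linear_form_map k s" "\<And>X. X \<in> fst ` L \<Longrightarrow> (X, s X) \<in> L"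
    and \<omega>: "\<omega> \<in> Ann k (fst ` L)" and f: "linear f"
  obtains B where "B \<in> forms (Suc k)" "\<And>X. X \<in> fst ` L \<Longrightarrow> iota X B = (\<lambda>v. f X * \<omega> v - s X v)"
proof -
  have \<omega>_forms: "\<omega> \<in> forms k" using \<omega> unfolding Ann_def by blast
  note sD = linear_form_mapD[OF s(1)]
  have "linear_form_map k (\<lambda>X v. f X * \<omega> v - s X v)"
    unfolding linear_form_map_def
  proof (intro conjI allI)
    show "(\<lambda>v. f X * \<omega> v - s X v) \<in> forms k" for X
      by (rule forms_diff[OF forms_scale[OF \<omega>_forms] sD(1)])
    show "(\<lambda>v. f (X + Y) * \<omega> v - s (X + Y) v) = (\<lambda>v. f X * \<omega> v - s X v + (f Y * \<omega> v - s Y v))"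
      for X Y unfolding linear_add[OF f] sD(2) by (rule ext) (simp add: algebra_simps)
    show "(\<lambda>v. f (c *\<^sub>R X) * \<omega> v - s (c *\<^sub>R X) v) = (\<lambda>v. c * (f X * \<omega> v - s X v))"
      for c X unfolding linear_scale[OF f] sD(3) by (rule ext) (simp add: algebra_simps)
  qed
  moreover have "skew_on (fst ` L) (\<lambda>X v. f X * \<omega> v - s X v)"
    unfolding skew_on_def
  proof (intro ballI ext)
    fix X Y v assume XY: "X \<in> fst ` L" "Y \<in> fst ` L"
    have "iota X \<omega> v = 0" "iota Y \<omega> v = 0" using \<omega> XY unfolding Ann_def by auto
    moreover have "iota X (s Y) v + iota Y (s X) v = 0" using isotropicD[OF iso s(2) s(2)] XY by blast
    ultimately show "iota X (\<lambda>v. f Y * \<omega> v - s Y v) v = - iota Y (\<lambda>v. f X * \<omega> v - s X v) v"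
      unfolding iota_diff_right iota_scale_right by simp
  qed
  ultimately show ?thesis
    using exists_form_extending_skew_map[OF k _ subspace_fst_image[OF L]] that by blast
qed

text \<open>For \<open>B\<close> as above, \<open>e\<^sup>B\<close> moves every form of \<open>L\<close> into \<open>(L \<inter> \<And>\<^sup>k V\<^sup>*) + \<real>\<omega> \<subseteq> Ann(pr\<^sub>1 L)\<close>.\<close>
lemma snd_expB_subset_Ann:
  fixes L :: "('v::real_vector \<times> 'v form) set"
  assumes k: "1 \<le> k" and L: "is_subspace k L" and iso: "isotropic k L"
    and s: "\<And>X. X \<in> fst ` L \<Longrightarrow> (X, s X) \<in> L"
    and \<omega>: "\<omega> \<in> Ann k (fst ` L)"
    and B: "\<And>X. X \<in> fst ` L \<Longrightarrow> iota X B = (\<lambda>v. f X * \<omega> v - s X v)"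
  shows "snd ` expB B L \<subseteq> Ann k (fst ` L)"
proof
  fix \<eta> assume "\<eta> \<in> snd ` expB B L"
  then obtain X \<alpha> where XL: "(X, \<alpha>) \<in> L" and \<eta>: "\<eta> = (\<lambda>v. \<alpha> v + iota X B v)"
    unfolding expB_def by auto
  have X: "X \<in> fst ` L" using XL by force
  have "(0, \<lambda>v. \<alpha> v - s X v) \<in> L" using is_subspace_diff[OF L XL s[OF X]] by simp
  then have "(\<lambda>v. \<alpha> v - s X v) \<in> Ann k (fst ` L)" by (rule isotropic_forms_in_Ann[OF k L iso])
  from Ann_add[OF this Ann_scale[OF \<omega>, of "f X"]]
  show "\<eta> \<in> Ann k (fst ` L)" unfolding \<eta> B[OF X] by (simp add: algebra_simps)
qed

lemma not_weakly_lagrangian_expB_if_not_standard: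
  fixes L :: "('v::euclidean_space \<times> 'v form) set"
  assumes k: "1 \<le> k" and L: "is_subspace k L" and iso: "isotropic k L" and "\<not> standard k L"
  shows "\<exists>B\<in>forms (Suc k). \<not> weakly_lagrangian k (expB B L)"
proof -
  obtain s where s: "linear_form_map k s" "\<And>X. X \<in> fst ` L \<Longrightarrow> (X, s X) \<in> L"
    using exists_linear_section[OF L] by blast
  obtain B where B: "B \<in> forms (Suc k)" "\<And>X. X \<in> fst ` L \<Longrightarrow> iota X B = (\<lambda>v. 0 * (\<lambda>v. 0) v - s X v)"
    using exists_B_twisting_section[OF k L iso s Ann_zero bounded_linear_zero[THEN bounded_linear.linear]]
    by blast
  have "annV (Ann k (fst ` L)) \<subseteq> annV (snd ` expB B L)"
    by (rule annV_antimono[OF snd_expB_subset_Ann[OF k L iso s(2) Ann_zero B(2)]])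
  moreover have "\<not> annV (Ann k (fst ` L)) \<subseteq> fst ` L"
    using assms(4) subset_annV_Ann unfolding standard_def by blast
  ultimately have "capV (expB B L) \<noteq> annV (snd ` expB B L)"
    using capV_expB_subset by blast
  then show ?thesis using B(1) unfolding weakly_lagrangian_def by blast
qed

lemma not_weakly_lagrangian_expB_if_not_lagrangian:
  fixes L :: "('v::euclidean_space \<times> 'v form) set"
  assumes k: "1 \<le> k" and L: "is_subspace k L" and iso: "isotropic k L" and "standard k L"
    and "fst ` L \<noteq> {0}" and "\<not> lagrangian k L"
  shows "\<exists>B\<in>forms (Suc k). \<not> weakly_lagrangian k (expB B L)"
proof -
  obtain \<omega> where \<omega>: "\<omega> \<in> Ann k (fst ` L)" "(0, \<omega>) \<notin> L"
    using lagrangian_if_Ann_in[OF k L iso \<open>standard k L\<close>] \<open>\<not> lagrangian k L\<close> by blast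
  have "0 \<in> fst ` L" using is_subspaceD(2)[OF L] by force
  then obtain X\<^sub>0 where X\<^sub>0: "X\<^sub>0 \<in> fst ` L" "X\<^sub>0 \<noteq> 0" using \<open>fst ` L \<noteq> {0}\<close> by blast
  define f where "f X = (X \<bullet> X\<^sub>0) / (X\<^sub>0 \<bullet> X\<^sub>0)" for X
  have f: "linear f" unfolding f_def linear_iff by (simp add: inner_add_left add_divide_distrib)
  have f_X\<^sub>0: "f X\<^sub>0 = 1" unfolding f_def using X\<^sub>0(2) by simp
  obtain s where s: "linear_form_map k s" "\<And>X. X \<in> fst ` L \<Longrightarrow> (X, s X) \<in> L"
    using exists_linear_section[OF L] by blast
  obtain B where B: "B \<in> forms (Suc k)" "\<And>X. X \<in> fst ` L \<Longrightarrow> iota X B = (\<lambda>v. f X * \<omega> v - s X v)"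
    using exists_B_twisting_section[OF k L iso s \<omega>(1) f] by blast
  have "X\<^sub>0 \<in> annV (snd ` expB B L)"
    using X\<^sub>0(1) subset_annV_Ann annV_antimono[OF snd_expB_subset_Ann[OF k L iso s(2) \<omega>(1) B(2)]]
    by blast
  moreover have "X\<^sub>0 \<notin> capV (expB B L)"
  proof
    assume "X\<^sub>0 \<in> capV (expB B L)"
    then obtain \<alpha> where \<alpha>: "(X\<^sub>0, \<alpha>) \<in> L" "(\<lambda>v. 0) = (\<lambda>v. \<alpha> v + iota X\<^sub>0 B v)"
      unfolding capV_def mem_expB_iff by auto
    then have "\<omega> = (\<lambda>v. s X\<^sub>0 v - \<alpha> v)"
      unfolding B(2)[OF X\<^sub>0(1)] f_X\<^sub>0 by (simp add: fun_eq_iff algebra_simps)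
    with is_subspace_diff[OF L s(2)[OF X\<^sub>0(1)] \<alpha>(1)] \<omega>(2) show False by simp
  qed
  ultimately show ?thesis using B(1) unfolding weakly_lagrangian_def by blast
qed

theorem proposition3p20:
  fixes k :: nat
  assumes "1 \<le> k" and "k \<le> DIM('v::euclidean_space) - 1"
  shows
    "(\<forall>L :: ('v \<times> 'v form) set.
        is_subspace k L \<and> (\<forall>p\<in>L. fst p = 0) \<and> weakly_lagrangian k L \<longrightarrow>
        (\<forall>B\<in>forms (k + 1). weakly_lagrangian k (expB B L)))
     \<and> (\<forall>L :: ('v \<times> 'v form) set.
        is_subspace k L \<and> weakly_lagrangian k L \<and> standard k L \<and> fst ` L \<noteq> {0} \<longrightarrow>
        ((\<forall>B\<in>forms (k + 1). weakly_lagrangian k (expB B L)) \<longleftrightarrow> lagrangian k L))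
     \<and> (\<forall>L :: ('v \<times> 'v form) set.
        is_subspace k L \<and> weakly_lagrangian k L \<and> \<not> standard k L \<longrightarrow>
        (\<exists>B\<in>forms (k + 1). \<not> weakly_lagrangian k (expB B L)))"
proof (intro conjI allI impI)
  fix L :: "('v \<times> 'v form) set"
  assume "is_subspace k L \<and> (\<forall>p\<in>L. fst p = 0) \<and> weakly_lagrangian k L"
  then show "\<forall>B\<in>forms (k + 1). weakly_lagrangian k (expB B L)"
    using expB_eq_self_if_fst_zero[of _ k L] by simp
next
  fix L :: "('v \<times> 'v form) set"
  assume L: "is_subspace k L \<and> weakly_lagrangian k L \<and> standard k L \<and> fst ` L \<noteq> {0}"
  then have "isotropic k L" unfolding weakly_lagrangian_def by blast
  with L have "\<not> lagrangian k L \<Longrightarrow> \<exists>B\<in>forms (k + 1). \<not> weakly_lagrangian k (expB B L)"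
    using not_weakly_lagrangian_expB_if_not_lagrangian[OF \<open>1 \<le> k\<close>] by auto
  moreover have "lagrangian k L \<Longrightarrow> \<forall>B\<in>forms (k + 1). weakly_lagrangian k (expB B L)"
    using lagrangian_imp_weakly_lagrangian lagrangian_expB[OF \<open>1 \<le> k\<close>] by auto
  ultimately show "(\<forall>B\<in>forms (k + 1). weakly_lagrangian k (expB B L)) \<longleftrightarrow> lagrangian k L"
    by blast
next
  fix L :: "('v \<times> 'v form) set"
  assume L: "is_subspace k L \<and> weakly_lagrangian k L \<and> \<not> standard k L"
  then have "isotropic k L" unfolding weakly_lagrangian_def by blast
  with L show "\<exists>B\<in>forms (k + 1). \<not> weakly_lagrangian k (expB B L)"
    using not_weakly_lagrangian_expB_if_not_standard[OF \<open>1 \<le> k\<close>] by auto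
qed

end
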